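(* Let $T:\mathbb{Z}^d\curvearrowright(X,\mu)$ be an ergodic measure preserving action, let $q$ be a positive integer and $\delta>0$, and suppose $B\subset X$ is $(q,\delta)$-equidistributed. Let $h\in L^2(X,\mu)$ be the orthogonal projection of $\mathbb{1}_B$ onto $\mathrm{Eig}_T(R_q^* )$. Then $P_{T^q}\mathbb{1}_B=\mu(B)+h$ and $\|h\|_2\le\sqrt{2\delta+\delta^2}\,\mu(B)$.
   Context: Let $F_n=[1,n]^d\cap\mathbb{Z}^d$. $B$ is $(q,\delta)$-equidistributed if for $\mu$-a.e. $x$, $\lim_{n\to\infty}\frac{1}{|F_n|}|\{a\in F_n:T^{qa}x\in B\}|\le(1+\delta)\mu(B)$. $T^q$ is the action $a\mapsto T^{qa}$ and $P_{T^q}$ is the orthogonal projection of $L^2(X,\mu)$ onto the $T^q$-invariant functions. For a character $\chi$ of $\mathbb{Z}^d$, $f\in L^2$ is a $\chi$-eigenfunction if $f\circ T^a=\chi(a)f$ for all $a\in\mathbb{Z}^d$ (here $T^af:=f\circ T^a$); for a set $R$ of characters, $\mathrm{Eig}_T(R)$ is the closed linear span of all $\chi$-eigenfunctions with $\chi\in R$. $R_q=\{\chi:\chi^q=1\}$ and $R_q^*=R_q\setminus\{1\}$. *)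

theory Defs
  imports "HOL-Probability.Probability"
begin

text \<open>A measure preserving action of the group of integer vectors (index type 'd, so d = CARD('d))
  on the space M, given by T :: int^'d => 'a => 'a.\<close>
definition mp_action :: "'a measure \<Rightarrow> (int^'d \<Rightarrow> 'a \<Rightarrow> 'a) \<Rightarrow> bool" where
  "mp_action M T \<longleftrightarrow>
     (\<forall>a. T a \<in> measurable M M \<and> distr M M (T a) = M) \<and>
     (\<forall>x\<in>space M. T 0 x = x) \<and>
     (\<forall>a b. \<forall>x\<in>space M. T (a + b) x = T a (T b x))"

definition ergodic_action :: "'a measure \<Rightarrow> (int^'d \<Rightarrow> 'a \<Rightarrow> 'a) \<Rightarrow> bool" where
  "ergodic_action M T \<longleftrightarrow> mp_action M T \<and>
     (\<forall>A\<in>sets M. (\<forall>a. T a -` A \<inter> space M = A) \<longrightarrow> measure M A = 0 \<or> measure M A = 1)"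

definition box :: "nat \<Rightarrow> (int^'d) set" where
  "box n = {a. \<forall>i. 1 \<le> a $ i \<and> a $ i \<le> int n}"

definition equidistributed ::
  "'a measure \<Rightarrow> (int^'d \<Rightarrow> 'a \<Rightarrow> 'a) \<Rightarrow> nat \<Rightarrow> real \<Rightarrow> 'a set \<Rightarrow> bool" where
  "equidistributed M T q \<delta> B \<longleftrightarrow>
     (AE x in M. \<exists>L. (\<lambda>n. real (card {a \<in> (box n :: (int^'d) set). T (int q *s a) x \<in> B})
                            / real (card (box n :: (int^'d) set))) \<longlonglongrightarrow> L
                    \<and> L \<le> (1 + \<delta>) * measure M B)"

text \<open>Complex L^2(M) (functions, equality a.e. handled in the statements).\<close>
definition L2 :: "'a measure \<Rightarrow> ('a \<Rightarrow> complex) set" where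
  "L2 M = {f. f \<in> borel_measurable M \<and> integrable M (\<lambda>x. (cmod (f x))\<^sup>2)}"

definition L2_norm :: "'a measure \<Rightarrow> ('a \<Rightarrow> complex) \<Rightarrow> real" where
  "L2_norm M f = sqrt (integral\<^sup>L M (\<lambda>x. (cmod (f x))\<^sup>2))"

definition L2_inner :: "'a measure \<Rightarrow> ('a \<Rightarrow> complex) \<Rightarrow> ('a \<Rightarrow> complex) \<Rightarrow> complex" where
  "L2_inner M f g = integral\<^sup>L M (\<lambda>x. f x * cnj (g x))"

definition is_orth_proj ::
  "'a measure \<Rightarrow> ('a \<Rightarrow> complex) \<Rightarrow> ('a \<Rightarrow> complex) set \<Rightarrow> ('a \<Rightarrow> complex) \<Rightarrow> bool" where
  "is_orth_proj M f V h \<longleftrightarrow> h \<in> V \<and> (\<forall>v\<in>V. L2_inner M (\<lambda>x. f x - h x) v = 0)"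

definition inv_funs :: "'a measure \<Rightarrow> (int^'d \<Rightarrow> 'a \<Rightarrow> 'a) \<Rightarrow> nat \<Rightarrow> ('a \<Rightarrow> complex) set" where
  "inv_funs M T q = {g \<in> L2 M. \<forall>a. AE x in M. g (T (int q *s a) x) = g x}"

definition character :: "(int^'d \<Rightarrow> complex) \<Rightarrow> bool" where
  "character chr \<longleftrightarrow> (\<forall>a b. chr (a + b) = chr a * chr b) \<and> (\<forall>a. cmod (chr a) = 1)"

definition Rq :: "nat \<Rightarrow> (int^'d \<Rightarrow> complex) set" where
  "Rq q = {chr. character chr \<and> (\<forall>a. chr a ^ q = 1)}"

definition Rq_star :: "nat \<Rightarrow> (int^'d \<Rightarrow> complex) set" where
  "Rq_star q = Rq q - {\<lambda>_. 1}"

definition eigenfun :: "'a measure \<Rightarrow> (int^'d \<Rightarrow> 'a \<Rightarrow> 'a) \<Rightarrow> (int^'d \<Rightarrow> complex) \<Rightarrow> ('a \<Rightarrow> complex) \<Rightarrow> bool" where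
  "eigenfun M T chr f \<longleftrightarrow> f \<in> L2 M \<and> (\<forall>a. AE x in M. f (T a x) = chr a * f x)"

text \<open>Linear span of the chi-eigenfunctions, chi in R (finite sums; each eigenspace is a subspace).\<close>
definition eig_lin_span :: "'a measure \<Rightarrow> (int^'d \<Rightarrow> 'a \<Rightarrow> 'a) \<Rightarrow> (int^'d \<Rightarrow> complex) set \<Rightarrow> ('a \<Rightarrow> complex) set" where
  "eig_lin_span M T R = {g. \<exists>F. finite F \<and> (\<forall>f\<in>F. \<exists>chr\<in>R. eigenfun M T chr f) \<and> g = (\<lambda>x. \<Sum>f\<in>F. f x)}"

definition Eig :: "'a measure \<Rightarrow> (int^'d \<Rightarrow> 'a \<Rightarrow> 'a) \<Rightarrow> (int^'d \<Rightarrow> complex) set \<Rightarrow> ('a \<Rightarrow> complex) set" where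
  "Eig M T R = {g \<in> L2 M. \<forall>e>0. \<exists>s\<in>eig_lin_span M T R. L2_norm M (\<lambda>x. g x - s x) < e}"

end

theory Submission
  imports Defs
begin

text \<open>
  Let \<mu> = \<mu>(B) and p = \<mu> + h. Since h lies in Eig(R_q^*), it is T^q-invariant and has integral 0,
  so 1_B - p is orthogonal to the constants and to Eig(R_q^*). A T^q-invariant g makes
  b \<mapsto> g \<circ> T^b a function on (Z/qZ)^d, and its Fourier coefficients split g into eigenfunctions
  whose characters have order dividing q; the one for the trivial character is T-invariant, hence
  constant by ergodicity. So 1_B - p is orthogonal to all T^q-invariant functions, and p is the projection.

  For the norm, orthogonality gives ||p||^2 = <1_B, p>. Invariance of p lets us replace 1_B by the
  visit frequencies over the boxes F_n and then by their a.e. limit L, which satisfies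
  0 \<le> L \<le> (1 + \<delta>) \<mu> and has integral \<mu>. Hence ||p||^2 \<le> \<integral> L |p|, and a weighted AM-GM
  inequality turns this into ||p||^2 \<le> (1 + \<delta>) \<mu>^2. Finally ||h||^2 = ||p||^2 - \<mu>^2 \<le> \<delta> \<mu>^2.
\<close>

subsection \<open>The space L2\<close>

lemma L2_borel_measurable: "f \<in> L2 M \<Longrightarrow> f \<in> borel_measurable M"
  by (simp add: L2_def)

lemma L2_integrable_sq: "f \<in> L2 M \<Longrightarrow> integrable M (\<lambda>x. (cmod (f x))\<^sup>2)"
  by (simp add: L2_def)

lemma borel_measurable_cnj [measurable (raw)]:
  "g \<in> borel_measurable M \<Longrightarrow> (\<lambda>x. cnj (g x)) \<in> borel_measurable M"
  by (rule borel_measurable_continuous_on[OF continuous_on_cnj[OF continuous_on_id]])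

lemma cmod_add_sq_le: "(cmod (u + v))\<^sup>2 \<le> 2 * (cmod u)\<^sup>2 + 2 * (cmod v)\<^sup>2"
proof -
  have "(cmod (u + v))\<^sup>2 \<le> (cmod u + cmod v)\<^sup>2"
    by (intro power_mono norm_triangle_ineq) auto
  also have "\<dots> \<le> 2 * (cmod u)\<^sup>2 + 2 * (cmod v)\<^sup>2"
    using sum_squares_bound[of "cmod u" "cmod v"] by (simp add: power2_eq_square algebra_simps)
  finally show ?thesis .
qed

lemma integrable_mult_cnj_L2:
  assumes "f \<in> L2 M" "g \<in> L2 M"
  shows "integrable M (\<lambda>x. f x * cnj (g x))"
proof (rule Bochner_Integration.integrable_bound)
  show "integrable M (\<lambda>x. ((cmod (f x))\<^sup>2 + (cmod (g x))\<^sup>2) / 2)"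
    using assms by (intro integrable_divide Bochner_Integration.integrable_add L2_integrable_sq)
  show "(\<lambda>x. f x * cnj (g x)) \<in> borel_measurable M"
    using assms[THEN L2_borel_measurable] by measurable
  show "AE x in M. norm (f x * cnj (g x)) \<le> norm (((cmod (f x))\<^sup>2 + (cmod (g x))\<^sup>2) / 2)"
  proof (rule AE_I2)
    fix x
    show "norm (f x * cnj (g x)) \<le> norm (((cmod (f x))\<^sup>2 + (cmod (g x))\<^sup>2) / 2)"
      using sum_squares_bound[of "cmod (f x)" "cmod (g x)"] by (simp add: norm_mult power2_eq_square)
  qed
qed

lemma L2_const: "finite_measure M \<Longrightarrow> (\<lambda>x. c) \<in> L2 M"
  by (simp add: L2_def finite_measure.integrable_const)

lemma integrable_L2: "finite_measure M \<Longrightarrow> f \<in> L2 M \<Longrightarrow> integrable M f"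
  using integrable_mult_cnj_L2[of f M "\<lambda>_. 1"] L2_const[of M 1] by simp

lemma L2_add:
  assumes "f \<in> L2 M" "g \<in> L2 M"
  shows "(\<lambda>x. f x + g x) \<in> L2 M"
  unfolding L2_def
proof safe
  show "(\<lambda>x. f x + g x) \<in> borel_measurable M"
    using assms[THEN L2_borel_measurable] by measurable
  show "integrable M (\<lambda>x. (cmod (f x + g x))\<^sup>2)"
  proof (rule Bochner_Integration.integrable_bound)
    show "integrable M (\<lambda>x. 2 * (cmod (f x))\<^sup>2 + 2 * (cmod (g x))\<^sup>2)"
      using assms by (intro Bochner_Integration.integrable_add integrable_mult_right L2_integrable_sq)
    show "(\<lambda>x. (cmod (f x + g x))\<^sup>2) \<in> borel_measurable M"
      using assms[THEN L2_borel_measurable] by measurable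
    show "AE x in M. norm ((cmod (f x + g x))\<^sup>2) \<le> norm (2 * (cmod (f x))\<^sup>2 + 2 * (cmod (g x))\<^sup>2)"
      using cmod_add_sq_le by simp
  qed
qed

lemma L2_mult_left:
  assumes "f \<in> L2 M"
  shows "(\<lambda>x. c * f x) \<in> L2 M"
proof -
  have "(\<lambda>x. (cmod (c * f x))\<^sup>2) = (\<lambda>x. (cmod c)\<^sup>2 * (cmod (f x))\<^sup>2)"
    by (simp add: norm_mult power_mult_distrib)
  then show ?thesis
    using assms L2_borel_measurable[OF assms] L2_integrable_sq[OF assms] by (simp add: L2_def)
qed

lemma L2_diff: "f \<in> L2 M \<Longrightarrow> g \<in> L2 M \<Longrightarrow> (\<lambda>x. f x - g x) \<in> L2 M"
  using L2_add[of f M "\<lambda>x. - g x"] L2_mult_left[of g M "-1"] by simp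

lemma L2_sum:
  "finite I \<Longrightarrow> (\<And>i. i \<in> I \<Longrightarrow> f i \<in> L2 M) \<Longrightarrow> (\<lambda>x. \<Sum>i\<in>I. f i x) \<in> L2 M"
  by (induction I rule: finite_induct) (simp add: L2_def, simp add: L2_add)

lemma L2_indicator:
  assumes "finite_measure M" "B \<in> sets M"
  shows "(indicator B :: 'a \<Rightarrow> complex) \<in> L2 M"
proof -
  have "(\<lambda>x. (cmod (indicator B x :: complex))\<^sup>2) = (\<lambda>x. indicator B x :: real)"
    by (auto simp: indicator_def)
  then show ?thesis
    using assms finite_measure.emeasure_finite[OF assms(1), of B]
    by (simp add: L2_def integrable_indicator_iff less_top)
qed

lemma (in prob_space) integral_cmod_le_L2_norm:
  assumes u: "u \<in> L2 M"
  shows "(\<integral>x. cmod (u x) \<partial>M) \<le> L2_norm M u"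
proof -
  define m where "m = (\<integral>x. cmod (u x) \<partial>M)"
  have "integrable M (\<lambda>x. cmod (u x))"
    using integrable_L2[OF finite_measure u] by simp
  then have "(\<integral>x. (cmod (u x) - m)\<^sup>2 \<partial>M) = (\<integral>x. (cmod (u x))\<^sup>2 - 2 * m * cmod (u x) + m\<^sup>2 \<partial>M)"
    by (simp add: power2_diff algebra_simps)
  also have "\<dots> = (\<integral>x. (cmod (u x))\<^sup>2 \<partial>M) - m\<^sup>2"
    using \<open>integrable M (\<lambda>x. cmod (u x))\<close> L2_integrable_sq[OF u] prob_space
    by (simp add: m_def power2_eq_square)
  moreover have "0 \<le> (\<integral>x. (cmod (u x) - m)\<^sup>2 \<partial>M)" by simp
  ultimately have "m\<^sup>2 \<le> (\<integral>x. (cmod (u x))\<^sup>2 \<partial>M)" by simp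
  then show ?thesis unfolding L2_norm_def m_def by (rule real_le_rsqrt)
qed

subsection \<open>Measure preserving actions\<close>

lemma mp_action_measurable: "mp_action M T \<Longrightarrow> T a \<in> measurable M M"
  by (simp add: mp_action_def)

lemma mp_action_distr: "mp_action M T \<Longrightarrow> distr M M (T a) = M"
  by (simp add: mp_action_def)

lemma mp_action_zero: "mp_action M T \<Longrightarrow> x \<in> space M \<Longrightarrow> T 0 x = x"
  by (simp add: mp_action_def)

lemma mp_action_add: "mp_action M T \<Longrightarrow> x \<in> space M \<Longrightarrow> T (a + b) x = T a (T b x)"
  by (simp add: mp_action_def)

lemma mp_action_space: "mp_action M T \<Longrightarrow> x \<in> space M \<Longrightarrow> T a x \<in> space M"
  by (rule measurable_space[OF mp_action_measurable])

lemma integral_mp_action: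
  fixes g :: "'a \<Rightarrow> 'b::{banach, second_countable_topology}"
  assumes "mp_action M T" "g \<in> borel_measurable M"
  shows "(\<integral>x. g (T a x) \<partial>M) = integral\<^sup>L M g"
  using integral_distr[OF mp_action_measurable[OF assms(1)] assms(2)] mp_action_distr[OF assms(1)]
  by simp

lemma integrable_mp_action:
  fixes g :: "'a \<Rightarrow> 'b::{banach, second_countable_topology}"
  assumes "mp_action M T" "g \<in> borel_measurable M" "integrable M g"
  shows "integrable M (\<lambda>x. g (T a x))"
  using integrable_distr_eq[OF mp_action_measurable[OF assms(1)] assms(2)]
    mp_action_distr[OF assms(1)] assms(3)
  by simp

lemma AE_mp_action:
  assumes "mp_action M T" "AE x in M. P x"
  shows "AE x in M. P (T a x)"
proof -
  from assms(2) obtain N where N: "N \<in> null_sets M" "{x\<in>space M. \<not> P x} \<subseteq> N"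
    by (auto simp: eventually_ae_filter)
  have "emeasure M (T a -` N \<inter> space M) = emeasure (distr M M (T a)) N"
    using emeasure_distr[OF mp_action_measurable[OF assms(1)]] N by auto
  then have "T a -` N \<inter> space M \<in> null_sets M"
    using N mp_action_measurable[OF assms(1)] mp_action_distr[OF assms(1)]
    by (auto intro: measurable_sets simp: null_sets_def)
  moreover have "{x\<in>space M. \<not> P (T a x)} \<subseteq> T a -` N \<inter> space M"
    using N mp_action_space[OF assms(1)] by auto
  ultimately show ?thesis by (rule AE_I')
qed

lemma L2_mp_action:
  assumes "mp_action M T" "f \<in> L2 M"
  shows "(\<lambda>x. f (T a x)) \<in> L2 M"
  using measurable_compose[OF mp_action_measurable[OF assms(1)] L2_borel_measurable[OF assms(2)]]
    integrable_mp_action[OF assms(1), of "\<lambda>x. (cmod (f x))\<^sup>2"]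
    L2_borel_measurable[OF assms(2)] L2_integrable_sq[OF assms(2)]
  by (simp add: L2_def)

subsection \<open>Ergodicity\<close>

lemma (in prob_space) AE_eq_integral_if_AE_le:
  fixes u :: "'a \<Rightarrow> real"
  assumes "integrable M u" "AE x in M. u x \<le> integral\<^sup>L M u"
  shows "AE x in M. u x = integral\<^sup>L M u"
proof -
  have "integrable M (\<lambda>x. integral\<^sup>L M u - u x)" and "(\<integral>x. integral\<^sup>L M u - u x \<partial>M) = 0"
    using assms(1) prob_space by simp_all
  moreover have "AE x in M. 0 \<le> integral\<^sup>L M u - u x"
    using assms(2) by eventually_elim simp
  ultimately have "AE x in M. integral\<^sup>L M u - u x = 0"
    using integral_nonneg_eq_0_iff_AE by blast
  then show ?thesis by eventually_elim simp
qed

lemma mp_action_orbit_set_invariant: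
  assumes "mp_action M T"
  shows "T b -` {x\<in>space M. \<forall>a. P (T a x)} \<inter> space M = {x\<in>space M. \<forall>a. P (T a x)}"
proof (intro set_eqI iffI)
  fix x assume "x \<in> T b -` {x\<in>space M. \<forall>a. P (T a x)} \<inter> space M"
  then have x: "x \<in> space M" and P: "\<And>a. P (T a (T b x))" by auto
  have "P (T a x)" for a
    using P[of "a - b"] mp_action_add[OF assms x, of "a - b" b] by simp
  with x show "x \<in> {x\<in>space M. \<forall>a. P (T a x)}" by simp
next
  fix x assume "x \<in> {x\<in>space M. \<forall>a. P (T a x)}"
  then have x: "x \<in> space M" and P: "\<And>a. P (T a x)" by auto
  have "P (T a (T b x))" for a
    using P[of "a + b"] mp_action_add[OF assms x] by simp
  with x mp_action_space[OF assms x] show "x \<in> T b -` {x\<in>space M. \<forall>a. P (T a x)} \<inter> space M"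
    by simp
qed

lemma (in prob_space) ergodic_invariant_real_AE_const:
  fixes u :: "'a \<Rightarrow> real"
  assumes erg: "ergodic_action M T" and u[measurable]: "u \<in> borel_measurable M"
    and int: "integrable M u" and inv: "\<And>a. AE x in M. u (T a x) = u x"
  shows "AE x in M. u x = integral\<^sup>L M u"
proof -
  have mp: "mp_action M T" using erg by (simp add: ergodic_action_def)
  have [measurable]: "T a \<in> M \<rightarrow>\<^sub>M M" for a by (rule mp_action_measurable[OF mp])
  define m where "m = integral\<^sup>L M u"
  define A where "A = {x\<in>space M. \<forall>a. m < u (T a x)}"
  have A: "A \<in> sets M" unfolding A_def by measurable
  have "T b -` A \<inter> space M = A" for b
    unfolding A_def by (rule mp_action_orbit_set_invariant[OF mp])
  then have "measure M A = 0 \<or> measure M A = 1"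
    using erg A unfolding ergodic_action_def by blast
  moreover have A_iff: "AE x in M. x \<in> A \<longleftrightarrow> m < u x"
  proof -
    have "AE x in M. \<forall>a. u (T a x) = u x" unfolding AE_all_countable using inv by blast
    with AE_space show ?thesis
      by eventually_elim (simp add: A_def)
  qed
  moreover have False if "measure M A = 1"
  proof -
    have "AE x in M. x \<in> A" using that by (rule AE_prob_1)
    with A_iff have above: "AE x in M. m < u x" by eventually_elim simp
    then have "AE x in M. - u x \<le> integral\<^sup>L M (\<lambda>x. - u x)"
      by eventually_elim (simp add: m_def)
    then have "AE x in M. - u x = integral\<^sup>L M (\<lambda>x. - u x)"
      using int by (intro AE_eq_integral_if_AE_le) auto
    with above have "AE x in M. False" by eventually_elim (simp add: m_def)
    then show False by (simp add: AE_False)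
  qed
  moreover have "AE x in M. u x = m" if "measure M A = 0"
  proof -
    have "prob (space M - A) = 1" using prob_compl[OF A] that by simp
    then have "AE x in M. x \<in> space M - A" by (rule AE_prob_1)
    with A_iff have "AE x in M. u x \<le> m" by eventually_elim auto
    then show ?thesis
      using int AE_eq_integral_if_AE_le unfolding m_def by blast
  qed
  ultimately show ?thesis unfolding m_def by blast
qed

lemma (in prob_space) ergodic_invariant_L2_AE_const:
  assumes erg: "ergodic_action M T" and g: "g \<in> L2 M"
    and inv: "\<And>a. AE x in M. g (T a x) = g x"
  shows "\<exists>c. AE x in M. g x = c"
proof -
  have int: "integrable M g" by (rule integrable_L2[OF finite_measure g])
  have [measurable]: "g \<in> borel_measurable M" by (rule L2_borel_measurable[OF g])
  have "AE x in M. Re (g (T a x)) = Re (g x)" "AE x in M. Im (g (T a x)) = Im (g x)" for a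
    using inv[of a] by (eventually_elim, simp)+
  then have "AE x in M. Re (g x) = integral\<^sup>L M (\<lambda>x. Re (g x))"
    and "AE x in M. Im (g x) = integral\<^sup>L M (\<lambda>x. Im (g x))"
    using int by (intro ergodic_invariant_real_AE_const[OF erg]; simp)+
  then have "AE x in M. g x = Complex (\<integral>x. Re (g x) \<partial>M) (\<integral>x. Im (g x) \<partial>M)"
    by eventually_elim (simp add: complex_eq_iff)
  then show ?thesis by blast
qed

subsection \<open>Eigenfunctions\<close>

lemma character_zero: "character chr \<Longrightarrow> chr 0 = 1"
  unfolding character_def by (metis add_0 mult_cancel_left2 norm_zero zero_neq_one)

lemma character_scale: "character chr \<Longrightarrow> chr (int n *s a) = chr a ^ n"
proof (induction n)
  case 0
  then show ?case using character_zero by (simp add: vec_eq_iff)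
next
  case (Suc n)
  have "int (Suc n) *s a = a + int n *s a" by (simp add: vec_eq_iff algebra_simps)
  then show ?case using Suc unfolding character_def by simp
qed

lemma eigenfun_L2: "eigenfun M T chr f \<Longrightarrow> f \<in> L2 M"
  by (simp add: eigenfun_def)

lemma (in prob_space) integral_eigenfun_nontrivial:
  assumes mp: "mp_action M T" and f: "eigenfun M T chr f" and chr: "chr \<noteq> (\<lambda>_. 1)"
  shows "integral\<^sup>L M f = 0"
proof -
  obtain a where a: "chr a \<noteq> 1" using chr by auto
  have L: "f \<in> L2 M" and ae: "AE x in M. f (T a x) = chr a * f x"
    using f unfolding eigenfun_def by auto
  have [measurable]: "f \<in> borel_measurable M" by (rule L2_borel_measurable[OF L])
  have "integral\<^sup>L M f = (\<integral>x. f (T a x) \<partial>M)"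
    by (simp add: integral_mp_action[OF mp])
  also have "\<dots> = (\<integral>x. chr a * f x \<partial>M)"
    using ae L2_borel_measurable[OF L2_mp_action[OF mp L]] by (intro integral_cong_AE) auto
  finally have "(1 - chr a) * integral\<^sup>L M f = 0" by (simp add: algebra_simps)
  then show ?thesis using a by simp
qed

lemma eigenfun_Rq_invariant:
  assumes "eigenfun M T chr f" "chr \<in> Rq q"
  shows "AE x in M. f (T (int q *s a) x) = f x"
proof -
  have "AE x in M. f (T (int q *s a) x) = chr (int q *s a) * f x"
    using assms(1) by (simp add: eigenfun_def)
  moreover have "chr (int q *s a) = 1"
    using assms(2) character_scale[of chr q a] by (simp add: Rq_def)
  ultimately show ?thesis by simp
qed

lemma eigenfun_in_Eig:
  assumes "eigenfun M T chr f" "chr \<in> R"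
  shows "f \<in> Eig M T R"
proof -
  have "f \<in> eig_lin_span M T R"
    unfolding eig_lin_span_def using assms by (intro CollectI exI[of _ "{f}"]) auto
  moreover have "L2_norm M (\<lambda>x. f x - f x) = 0" by (simp add: L2_norm_def)
  ultimately show ?thesis unfolding Eig_def using eigenfun_L2[OF assms(1)] by force
qed

lemma (in prob_space) eig_lin_span_Rq_star:
  assumes mp: "mp_action M T" and s: "s \<in> eig_lin_span M T (Rq_star q)"
  shows "s \<in> L2 M" "integral\<^sup>L M s = 0" "AE x in M. s (T (int q *s a) x) = s x"
proof -
  obtain F where F: "finite F" "\<And>f. f \<in> F \<Longrightarrow> \<exists>chr\<in>Rq_star q. eigenfun M T chr f"
    and s_def: "s = (\<lambda>x. \<Sum>f\<in>F. f x)"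
    using s unfolding eig_lin_span_def by blast
  have FL: "f \<in> L2 M" if "f \<in> F" for f using F(2)[OF that] eigenfun_L2 by blast
  show "s \<in> L2 M" unfolding s_def by (rule L2_sum[OF F(1) FL])
  have "integral\<^sup>L M f = 0" if "f \<in> F" for f
    using F(2)[OF that] integral_eigenfun_nontrivial[OF mp] unfolding Rq_star_def by blast
  then show "integral\<^sup>L M s = 0"
    unfolding s_def using integrable_L2[OF finite_measure FL] by (simp add: Bochner_Integration.integral_sum)
  have "AE x in M. \<forall>f\<in>F. f (T (int q *s a) x) = f x"
    using F eigenfun_Rq_invariant unfolding Rq_star_def by (intro AE_finite_allI) blast+
  then show "AE x in M. s (T (int q *s a) x) = s x"
    unfolding s_def by eventually_elim (auto intro: sum.cong)
qed

lemma L2_norm_sq: "(L2_norm M u)\<^sup>2 = (\<integral>x. (cmod (u x))\<^sup>2 \<partial>M)"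
  by (simp add: L2_norm_def)

lemma (in prob_space) integral_Eig_Rq_star:
  assumes mp: "mp_action M T" and h: "h \<in> Eig M T (Rq_star q)"
  shows "integral\<^sup>L M h = 0"
proof (rule ccontr)
  assume "integral\<^sup>L M h \<noteq> 0"
  then have "cmod (integral\<^sup>L M h) > 0" by simp
  then obtain s where s: "s \<in> eig_lin_span M T (Rq_star q)"
    and close: "L2_norm M (\<lambda>x. h x - s x) < cmod (integral\<^sup>L M h)"
    using h unfolding Eig_def by blast
  have hL: "h \<in> L2 M" using h unfolding Eig_def by auto
  note sL = eig_lin_span_Rq_star(1,2)[OF mp s]
  have "integral\<^sup>L M h = (\<integral>x. h x - s x \<partial>M)"
    using integrable_L2[OF finite_measure hL] integrable_L2[OF finite_measure sL(1)] sL(2) by simp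
  then have "cmod (integral\<^sup>L M h) \<le> (\<integral>x. cmod (h x - s x) \<partial>M)"
    by (metis integral_norm_bound)
  also have "\<dots> \<le> L2_norm M (\<lambda>x. h x - s x)"
    by (rule integral_cmod_le_L2_norm[OF L2_diff[OF hL sL(1)]])
  finally show False using close by simp
qed

lemma integral_cmod_sq_shift_diff_le:
  assumes mp: "mp_action M T" and h: "h \<in> L2 M" and s: "s \<in> L2 M"
    and s_inv: "AE x in M. s (T b x) = s x"
  shows "(\<integral>x. (cmod (h (T b x) - h x))\<^sup>2 \<partial>M) \<le> 4 * (\<integral>x. (cmod (h x - s x))\<^sup>2 \<partial>M)"
proof -
  define w where "w x = h x - s x" for x
  have w: "w \<in> L2 M" unfolding w_def by (rule L2_diff[OF h s])
  have wT: "(\<lambda>x. w (T b x)) \<in> L2 M" by (rule L2_mp_action[OF mp w])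
  have "(\<integral>x. (cmod (h (T b x) - h x))\<^sup>2 \<partial>M)
      \<le> (\<integral>x. 2 * (cmod (w (T b x)))\<^sup>2 + 2 * (cmod (- w x))\<^sup>2 \<partial>M)"
  proof (rule integral_mono_AE)
    show "integrable M (\<lambda>x. (cmod (h (T b x) - h x))\<^sup>2)"
      by (rule L2_integrable_sq[OF L2_diff[OF L2_mp_action[OF mp h] h]])
    show "integrable M (\<lambda>x. 2 * (cmod (w (T b x)))\<^sup>2 + 2 * (cmod (- w x))\<^sup>2)"
      using L2_integrable_sq[OF wT] L2_integrable_sq[OF w] by simp
    show "AE x in M. (cmod (h (T b x) - h x))\<^sup>2 \<le> 2 * (cmod (w (T b x)))\<^sup>2 + 2 * (cmod (- w x))\<^sup>2"
      using s_inv
    proof eventually_elim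
      case (elim x)
      then have "h (T b x) - h x = w (T b x) + - w x" unfolding w_def by simp
      then show ?case using cmod_add_sq_le[of "w (T b x)" "- w x"] by simp
    qed
  qed
  also have "\<dots> = 4 * (\<integral>x. (cmod (w x))\<^sup>2 \<partial>M)"
    using L2_integrable_sq[OF wT] L2_integrable_sq[OF w] L2_borel_measurable[OF w]
      integral_mp_action[OF mp, of "\<lambda>x. (cmod (w x))\<^sup>2"]
    by simp
  finally show ?thesis unfolding w_def .
qed

lemma (in prob_space) Eig_Rq_star_invariant:
  assumes mp: "mp_action M T" and h: "h \<in> Eig M T (Rq_star q)"
  shows "AE x in M. h (T (int q *s a) x) = h x"
proof -
  let ?b = "int q *s a"
  have hL: "h \<in> L2 M" using h unfolding Eig_def by auto
  have vL: "(\<lambda>x. h (T ?b x) - h x) \<in> L2 M" by (rule L2_diff[OF L2_mp_action[OF mp hL] hL])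
  define I where "I = (\<integral>x. (cmod (h (T ?b x) - h x))\<^sup>2 \<partial>M)"
  have small: "I < 4 * e\<^sup>2" if "e > 0" for e
  proof -
    obtain s where s: "s \<in> eig_lin_span M T (Rq_star q)" and "L2_norm M (\<lambda>x. h x - s x) < e"
      using h \<open>e > 0\<close> unfolding Eig_def by auto
    then have "(\<integral>x. (cmod (h x - s x))\<^sup>2 \<partial>M) < e\<^sup>2"
      unfolding L2_norm_sq[symmetric] by (intro power_strict_mono) (auto simp: L2_norm_def)
    then show ?thesis
      using integral_cmod_sq_shift_diff_le[OF mp hL eig_lin_span_Rq_star(1)[OF mp s]
        eig_lin_span_Rq_star(3)[OF mp s, of a]]
      unfolding I_def by simp
  qed
  have "I = 0"
  proof (rule ccontr)
    assume "I \<noteq> 0"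
    moreover have "I \<ge> 0" unfolding I_def by simp
    ultimately have "I > 0" by linarith
    then have "I < I / 4" using small[of "sqrt I / 4"] by (simp add: power_divide)
    with \<open>I > 0\<close> show False by simp
  qed
  then have "AE x in M. (cmod (h (T ?b x) - h x))\<^sup>2 = 0"
    using integral_nonneg_eq_0_iff_AE[OF L2_integrable_sq[OF vL]] unfolding I_def by simp
  then show ?thesis by eventually_elim simp
qed

subsection \<open>Characters of order dividing q\<close>

definition int_dot :: "int^'d \<Rightarrow> int^'d \<Rightarrow> int" where
  "int_dot k a = (\<Sum>i\<in>UNIV. k$i * a$i)"

definition unit_root :: "nat \<Rightarrow> int \<Rightarrow> complex" where
  "unit_root q m = cis (2 * pi * of_int m / of_nat q)"

definition residue_cube :: "nat \<Rightarrow> (int^'d) set" where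
  "residue_cube q = {k. \<forall>i. 0 \<le> k$i \<and> k$i < int q}"

definition vec_mod :: "nat \<Rightarrow> int^'d \<Rightarrow> int^'d" where
  "vec_mod q v = (\<chi> i. v$i mod int q)"

definition vec_div :: "nat \<Rightarrow> int^'d \<Rightarrow> int^'d" where
  "vec_div q v = (\<chi> i. v$i div int q)"

lemma int_dot_commute: "int_dot k a = int_dot a k"
  by (simp add: int_dot_def mult.commute)

lemma int_dot_add_right: "int_dot k (a + b) = int_dot k a + int_dot k b"
  by (simp add: int_dot_def algebra_simps sum.distrib)

lemma int_dot_scale_right: "int_dot k (c *s a) = c * int_dot k a"
  by (simp add: int_dot_def sum_distrib_left algebra_simps)

lemma int_dot_zero_right [simp]: "int_dot k 0 = 0"
  by (simp add: int_dot_def)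

lemma int_dot_axis_right: "int_dot k (axis j 1) = k$j"
proof -
  have "int_dot k (axis j 1) = (\<Sum>i\<in>UNIV. if i = j then k$j else 0)"
    unfolding int_dot_def axis_def by (intro sum.cong) auto
  then show ?thesis by simp
qed

lemma unit_root_add: "unit_root q (m + n) = unit_root q m * unit_root q n"
  unfolding unit_root_def cis_mult by (simp add: add_divide_distrib distrib_left)

lemma unit_root_zero [simp]: "unit_root q 0 = 1"
  by (simp add: unit_root_def)

lemma unit_root_multiple:
  assumes "q > 0"
  shows "unit_root q (int q * n) = 1"
proof -
  have "2 * pi * of_int (int q * n) / of_nat q = 2 * pi * of_int n" using assms by simp
  then show ?thesis unfolding unit_root_def by simp
qed

lemma unit_root_pow:
  assumes "q > 0"
  shows "unit_root q m ^ q = 1"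
proof -
  have "unit_root q m ^ q = cis (real q * (2 * pi * of_int m / of_nat q))"
    unfolding unit_root_def by (rule Complex.DeMoivre)
  also have "real q * (2 * pi * of_int m / of_nat q) = 2 * pi * of_int m" using assms by simp
  finally show ?thesis by simp
qed

lemma unit_root_eq_1_iff:
  assumes q: "q > 0"
  shows "unit_root q m = 1 \<longleftrightarrow> int q dvd m"
proof
  assume "unit_root q m = 1"
  then have "cos (2 * pi * of_int m / of_nat q) = 1"
    unfolding unit_root_def by (metis cis.sel(1) one_complex.sel(1))
  then obtain n :: int where "2 * pi * of_int m / of_nat q = of_int n * 2 * pi"
    using cos_one_2pi_int by blast
  then have "real_of_int m = of_int n * of_nat q" using q by (simp add: field_simps)
  then have "m = n * int q" by (metis of_int_eq_iff of_int_mult of_int_of_nat_eq)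
  then show "int q dvd m" by simp
qed (auto simp: unit_root_multiple[OF q])

lemma unit_root_ne_1:
  assumes "q > 0" "0 < \<bar>m\<bar>" "\<bar>m\<bar> < int q"
  shows "unit_root q m \<noteq> 1"
  using assms zdvd_imp_le[of "int q" "\<bar>m\<bar>"] by (auto simp: unit_root_eq_1_iff)

lemma finite_residue_cube: "finite (residue_cube q :: (int^'d) set)"
proof (rule finite_subset)
  show "residue_cube q \<subseteq> vec_lambda ` (PiE (UNIV :: 'd set) (\<lambda>_. {0..<int q}))"
  proof
    fix k :: "int^'d" assume "k \<in> residue_cube q"
    then have "(\<lambda>i. k$i) \<in> PiE UNIV (\<lambda>_. {0..<int q})" unfolding residue_cube_def by auto
    then show "k \<in> vec_lambda ` (PiE (UNIV :: 'd set) (\<lambda>_. {0..<int q}))"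
      by (metis image_eqI vec_lambda_eta)
  qed
qed (intro finite_imageI finite_PiE; simp)

lemma zero_in_residue_cube: "q > 0 \<Longrightarrow> 0 \<in> residue_cube q"
  by (simp add: residue_cube_def)

lemma vec_mod_in_residue_cube: "q > 0 \<Longrightarrow> vec_mod q v \<in> residue_cube q"
  by (simp add: vec_mod_def residue_cube_def)

lemma vec_mod_plus_vec_div: "v = vec_mod q v + int q *s vec_div q v"
  by (simp add: vec_mod_def vec_div_def vec_eq_iff)

lemma bij_betw_vec_mod_translate:
  fixes a :: "int^'d"
  assumes q: "q > 0"
  shows "bij_betw (\<lambda>b. vec_mod q (b + a)) (residue_cube q) (residue_cube q)"
proof (rule bij_betwI[where g = "\<lambda>b. vec_mod q (b - a)"])
  have inv: "vec_mod q (vec_mod q (b + c) - c) = b" if "b \<in> residue_cube q" for b c :: "int^'d"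
    using that unfolding vec_mod_def residue_cube_def by (simp add: vec_eq_iff mod_diff_left_eq)
  show "vec_mod q (vec_mod q (b + a) - a) = b" if "b \<in> residue_cube q" for b
    using inv[OF that] .
  show "vec_mod q (vec_mod q (b - a) + a) = b" if "b \<in> residue_cube q" for b
    using inv[OF that, of "- a"] by simp
qed (auto simp: vec_mod_in_residue_cube[OF q])

lemma sum_unit_root_residue_cube:
  fixes b :: "int^'d"
  assumes q: "q > 0" and b: "b \<in> residue_cube q" "b \<noteq> 0"
  shows "(\<Sum>k\<in>residue_cube q. unit_root q (- int_dot k b)) = 0"
proof -
  obtain j where j: "b$j \<noteq> 0" using b(2) by (auto simp: vec_eq_iff)
  then have bj: "0 < b$j" "b$j < int q" using b(1) unfolding residue_cube_def by (auto simp: order_le_less)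
  let ?e = "axis j 1 :: int^'d"
  let ?S = "\<Sum>k\<in>residue_cube q. unit_root q (- int_dot k b)"
  have shift: "unit_root q (- int_dot (vec_mod q (k + ?e)) b) = unit_root q (- b$j) * unit_root q (- int_dot k b)"
    for k
  proof -
    have "int_dot b (k + ?e) = int_dot b (vec_mod q (k + ?e)) + int q * int_dot b (vec_div q (k + ?e))"
      by (subst vec_mod_plus_vec_div) (simp add: int_dot_add_right int_dot_scale_right)
    then have "- int_dot (vec_mod q (k + ?e)) b
        = (- b$j + - int_dot k b) + int q * int_dot b (vec_div q (k + ?e))"
      by (simp add: int_dot_commute[of _ b] int_dot_add_right int_dot_axis_right)
    then show ?thesis by (simp only: unit_root_add unit_root_multiple[OF q] mult_1_right)
  qed
  have "?S = (\<Sum>k\<in>residue_cube q. unit_root q (- int_dot (vec_mod q (k + ?e)) b))"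
    using sum.reindex_bij_betw[OF bij_betw_vec_mod_translate[OF q, of ?e],
        of "\<lambda>k. unit_root q (- int_dot k b)"]
    by simp
  also have "\<dots> = unit_root q (- b$j) * ?S"
    by (simp add: shift sum_distrib_left)
  finally have "(1 - unit_root q (- b$j)) * ?S = 0" by (simp add: algebra_simps)
  moreover have "unit_root q (- b$j) \<noteq> 1" using unit_root_ne_1[OF q] bj by simp
  ultimately show ?thesis by simp
qed

lemma unit_root_character_Rq:
  "q > 0 \<Longrightarrow> (\<lambda>a. unit_root q (int_dot k a)) \<in> Rq q"
  by (simp add: Rq_def character_def int_dot_add_right unit_root_add unit_root_pow)
     (simp add: unit_root_def)

lemma unit_root_character_Rq_star:
  fixes k :: "int^'d"
  assumes q: "q > 0" and k: "k \<in> residue_cube q" "k \<noteq> 0"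
  shows "(\<lambda>a. unit_root q (int_dot k a)) \<in> Rq_star q"
proof -
  obtain j where "k$j \<noteq> 0" using k(2) by (auto simp: vec_eq_iff)
  then have "0 < k$j" "k$j < int q" using k(1) unfolding residue_cube_def by (auto simp: order_le_less)
  then have "unit_root q (int_dot k (axis j 1)) \<noteq> 1"
    using unit_root_ne_1[OF q] by (simp add: int_dot_axis_right)
  then have "(\<lambda>a. unit_root q (int_dot k a)) \<noteq> (\<lambda>_. 1)" by metis
  then show ?thesis using unit_root_character_Rq[OF q] unfolding Rq_star_def by auto
qed

subsection \<open>Decomposing T^q-invariant functions into eigenfunctions\<close>

text \<open>For T^q-invariant g this is the k-th Fourier coefficient of the (Z/qZ)^d-periodic map b \<mapsto> g \<circ> T^b.\<close>

definition fourier_component ::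
  "(int^'d \<Rightarrow> 'a \<Rightarrow> 'a) \<Rightarrow> nat \<Rightarrow> ('a \<Rightarrow> complex) \<Rightarrow> int^'d \<Rightarrow> 'a \<Rightarrow> complex" where
  "fourier_component T q g k x =
     (1 / of_nat (card (residue_cube q :: (int^'d) set))) *
     (\<Sum>b\<in>residue_cube q. unit_root q (- int_dot k b) * g (T b x))"

lemma L2_fourier_component:
  assumes "mp_action M T" "g \<in> L2 M"
  shows "fourier_component T q g k \<in> L2 M"
  unfolding fourier_component_def
  by (intro L2_mult_left L2_sum finite_residue_cube L2_mp_action[OF assms(1)] assms(2))

lemma sum_fourier_component:
  fixes T :: "int^'d \<Rightarrow> 'a \<Rightarrow> 'a"
  assumes mp: "mp_action M T" and q: "q > 0" and x: "x \<in> space M"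
  shows "(\<Sum>k\<in>residue_cube q. fourier_component T q g k x) = g x"
proof -
  let ?K = "residue_cube q :: (int^'d) set"
  let ?N = "of_nat (card ?K) :: complex"
  have "(\<Sum>k\<in>?K. fourier_component T q g k x)
      = (1 / ?N) * (\<Sum>b\<in>?K. (\<Sum>k\<in>?K. unit_root q (- int_dot k b)) * g (T b x))"
    unfolding fourier_component_def sum_distrib_left[symmetric]
    by (subst sum.swap) (simp add: sum_distrib_right mult.assoc)
  also have "(\<Sum>b\<in>?K. (\<Sum>k\<in>?K. unit_root q (- int_dot k b)) * g (T b x))
      = (\<Sum>b\<in>?K. if b = 0 then ?N * g (T 0 x) else 0)"
    using sum_unit_root_residue_cube[OF q] by (intro sum.cong) auto
  also have "\<dots> = ?N * g (T 0 x)"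
    by (simp add: finite_residue_cube zero_in_residue_cube[OF q])
  moreover have "?N \<noteq> 0"
    using finite_residue_cube zero_in_residue_cube[OF q] by (auto simp: card_eq_0_iff)
  ultimately show ?thesis using mp_action_zero[OF mp x] by simp
qed

lemma unit_root_int_dot_translate:
  assumes q: "q > 0"
  shows "unit_root q (- int_dot k b)
    = unit_root q (int_dot k a) * unit_root q (- int_dot k (vec_mod q (b + a)))"
proof -
  have "int_dot k (b + a) = int_dot k (vec_mod q (b + a)) + int q * int_dot k (vec_div q (b + a))"
    by (subst vec_mod_plus_vec_div) (simp add: int_dot_add_right int_dot_scale_right)
  then have "- int_dot k b
      = (int_dot k a + - int_dot k (vec_mod q (b + a))) + int q * (- int_dot k (vec_div q (b + a)))"
    by (simp add: int_dot_add_right algebra_simps)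
  then show ?thesis by (simp only: unit_root_add unit_root_multiple[OF q] mult_1_right)
qed

lemma mp_action_split_mod:
  assumes mp: "mp_action M T" and x: "x \<in> space M"
  shows "T b (T a x) = T (int q *s vec_div q (b + a)) (T (vec_mod q (b + a)) x)"
proof -
  have "T b (T a x) = T (b + a) x" by (simp add: mp_action_add[OF mp x])
  also have "\<dots> = T (int q *s vec_div q (b + a) + vec_mod q (b + a)) x"
    by (rule arg_cong[where f = "\<lambda>v. T v x", OF trans[OF vec_mod_plus_vec_div add.commute]])
  also have "\<dots> = T (int q *s vec_div q (b + a)) (T (vec_mod q (b + a)) x)"
    by (rule mp_action_add[OF mp x])
  finally show ?thesis .
qed

lemma fourier_component_eigenfun:
  fixes T :: "int^'d \<Rightarrow> 'a \<Rightarrow> 'a"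
  assumes mp: "mp_action M T" and q: "q > 0" and g: "g \<in> inv_funs M T q"
  shows "eigenfun M T (\<lambda>a. unit_root q (int_dot k a)) (fourier_component T q g k)"
  unfolding eigenfun_def
proof (intro conjI allI)
  have gL: "g \<in> L2 M" and inv: "\<And>a. AE x in M. g (T (int q *s a) x) = g x"
    using g unfolding inv_funs_def by auto
  show "fourier_component T q g k \<in> L2 M" by (rule L2_fourier_component[OF mp gL])
  fix a
  let ?K = "residue_cube q :: (int^'d) set"
  let ?r = "\<lambda>b :: int^'d. vec_mod q (b + a)"
  have "AE x in M. \<forall>b\<in>?K. g (T (int q *s vec_div q (b + a)) (T (?r b) x)) = g (T (?r b) x)"
    using inv AE_mp_action[OF mp] by (intro AE_finite_allI[OF finite_residue_cube]) blast
  with AE_space show "AE x in M. fourier_component T q g k (T a x)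
      = unit_root q (int_dot k a) * fourier_component T q g k x"
  proof eventually_elim
    case (elim x)
    then have x: "x \<in> space M" by simp
    have "unit_root q (- int_dot k b) * g (T b (T a x))
        = unit_root q (int_dot k a) * (unit_root q (- int_dot k (?r b)) * g (T (?r b) x))"
      if "b \<in> ?K" for b
      using elim that mp_action_split_mod[OF mp x, of b a q] unit_root_int_dot_translate[OF q, of k b a]
      by simp
    then have "(\<Sum>b\<in>?K. unit_root q (- int_dot k b) * g (T b (T a x)))
        = unit_root q (int_dot k a) * (\<Sum>b\<in>?K. unit_root q (- int_dot k (?r b)) * g (T (?r b) x))"
      by (simp add: sum_distrib_left)
    also have "(\<Sum>b\<in>?K. unit_root q (- int_dot k (?r b)) * g (T (?r b) x))
        = (\<Sum>b\<in>?K. unit_root q (- int_dot k b) * g (T b x))"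
      by (rule sum.reindex_bij_betw[OF bij_betw_vec_mod_translate[OF q]])
    finally show ?case unfolding fourier_component_def by simp
  qed
qed

lemma (in prob_space) L2_inner_invariant_eq_0:
  assumes erg: "ergodic_action M T" and r: "r \<in> L2 M" and r0: "integral\<^sup>L M r = 0"
    and f: "f \<in> L2 M" and inv: "\<And>a. AE x in M. f (T a x) = f x"
  shows "L2_inner M r f = 0"
proof -
  obtain c where c: "AE x in M. f x = c"
    using ergodic_invariant_L2_AE_const[OF erg f inv] by blast
  have "L2_inner M r f = (\<integral>x. r x * cnj c \<partial>M)"
    unfolding L2_inner_def using c L2_borel_measurable[OF r] L2_borel_measurable[OF f]
    by (intro integral_cong_AE) auto
  also have "\<dots> = 0" using r0 by simp
  finally show ?thesis .
qed

lemma (in prob_space) L2_inner_inv_funs_eq_0: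
  fixes T :: "int^'d \<Rightarrow> 'a \<Rightarrow> 'a"
  assumes erg: "ergodic_action M T" and q: "q > 0"
    and r: "r \<in> L2 M" and r_orth: "\<And>v. v \<in> Eig M T (Rq_star q) \<Longrightarrow> L2_inner M r v = 0"
    and r0: "integral\<^sup>L M r = 0" and g: "g \<in> inv_funs M T q"
  shows "L2_inner M r g = 0"
proof -
  have mp: "mp_action M T" using erg by (simp add: ergodic_action_def)
  have gL: "g \<in> L2 M" using g by (simp add: inv_funs_def)
  let ?K = "residue_cube q :: (int^'d) set"
  let ?g = "fourier_component T q g"
  have gkL: "?g k \<in> L2 M" for k by (rule L2_fourier_component[OF mp gL])
  have "L2_inner M r g = (\<integral>x. (\<Sum>k\<in>?K. r x * cnj (?g k x)) \<partial>M)"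
    unfolding L2_inner_def
    by (intro Bochner_Integration.integral_cong)
       (simp_all add: sum_distrib_left[symmetric] cnj_sum[symmetric] sum_fourier_component[OF mp q]
         del: cnj_sum)
  also have "\<dots> = (\<Sum>k\<in>?K. L2_inner M r (?g k))"
    unfolding L2_inner_def using integrable_mult_cnj_L2[OF r gkL] by simp
  also have "\<dots> = 0"
  proof (intro sum.neutral ballI)
    fix k assume k: "k \<in> ?K"
    note eig = fourier_component_eigenfun[OF mp q g, of k]
    show "L2_inner M r (?g k) = 0"
    proof (cases "k = 0")
      case True
      have "AE x in M. ?g k (T a x) = ?g k x" for a
        using eig True unfolding eigenfun_def by (simp add: int_dot_def)
      then show ?thesis by (rule L2_inner_invariant_eq_0[OF erg r r0 gkL])
    next
      case False
      then show ?thesis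
        using eigenfun_in_Eig[OF eig unit_root_character_Rq_star[OF q k]] r_orth by blast
    qed
  qed
  finally show ?thesis .
qed

subsection \<open>Visit frequencies\<close>

definition visit_freq :: "(int^'d \<Rightarrow> 'a \<Rightarrow> 'a) \<Rightarrow> nat \<Rightarrow> 'a set \<Rightarrow> nat \<Rightarrow> 'a \<Rightarrow> real" where
  "visit_freq T q B n x =
     real (card {a \<in> (box n :: (int^'d) set). T (int q *s a) x \<in> B}) / real (card (box n :: (int^'d) set))"

lemma finite_box: "finite (box n :: (int^'d) set)"
proof (rule finite_subset)
  show "box n \<subseteq> vec_lambda ` (PiE (UNIV :: 'd set) (\<lambda>_. {1..int n}))"
  proof
    fix k :: "int^'d" assume "k \<in> box n"
    then have "(\<lambda>i. k$i) \<in> PiE UNIV (\<lambda>_. {1..int n})" unfolding box_def by auto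
    then show "k \<in> vec_lambda ` (PiE (UNIV :: 'd set) (\<lambda>_. {1..int n}))"
      by (metis image_eqI vec_lambda_eta)
  qed
qed (intro finite_imageI finite_PiE; simp)

lemma card_box_pos: "n \<ge> 1 \<Longrightarrow> card (box n :: (int^'d) set) > 0"
  using finite_box[of n] by (auto simp: card_gt_0_iff box_def intro!: exI[of _ "\<chi> i. 1"])

lemma visit_freq_eq_sum:
  fixes T :: "int^'d \<Rightarrow> 'a \<Rightarrow> 'a"
  shows "visit_freq T q B n x
    = (\<Sum>a\<in>(box n :: (int^'d) set). indicator B (T (int q *s a) x)) / real (card (box n :: (int^'d) set))"
proof -
  have "real (card {a \<in> (box n :: (int^'d) set). T (int q *s a) x \<in> B})
      = (\<Sum>a\<in>(box n :: (int^'d) set). if T (int q *s a) x \<in> B then 1 else 0)"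
    unfolding real_of_card by (rule sum.inter_filter[OF finite_box])
  also have "\<dots> = (\<Sum>a\<in>(box n :: (int^'d) set). indicator B (T (int q *s a) x))"
    by (intro sum.cong) (auto simp: indicator_def)
  finally show ?thesis unfolding visit_freq_def by simp
qed

lemma visit_freq_nonneg: "0 \<le> visit_freq T q B n x"
  by (simp add: visit_freq_def)

lemma visit_freq_le_1:
  fixes T :: "int^'d \<Rightarrow> 'a \<Rightarrow> 'a"
  shows "visit_freq T q B n x \<le> 1"
proof -
  have "card {a \<in> (box n :: (int^'d) set). T (int q *s a) x \<in> B} \<le> card (box n :: (int^'d) set)"
    by (rule card_mono[OF finite_box]) auto
  then show ?thesis unfolding visit_freq_def
    by (cases "card (box n :: (int^'d) set) = 0") (auto simp: divide_le_eq_1)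
qed

lemma borel_measurable_visit_freq [measurable]:
  assumes "mp_action M T" "B \<in> sets M"
  shows "(\<lambda>x. visit_freq T q B n x) \<in> borel_measurable M"
  using assms(2) mp_action_measurable[OF assms(1)] unfolding visit_freq_eq_sum by measurable

lemma (in prob_space) integral_visit_freq_mult_cnj:
  fixes T :: "int^'d \<Rightarrow> 'a \<Rightarrow> 'a"
  assumes mp: "mp_action M T" and B: "B \<in> sets M" and p: "p \<in> inv_funs M T q" and n: "n \<ge> 1"
  shows "(\<integral>x. of_real (visit_freq T q B n x) * cnj (p x) \<partial>M) = (\<integral>x. indicator B x * cnj (p x) \<partial>M)"
proof -
  let ?S = "box n :: (int^'d) set"
  let ?f = "\<lambda>a x. indicator B (T (int q *s a) x) * cnj (p x) :: complex"
  have pL: "p \<in> L2 M" and p_inv: "\<And>a. AE x in M. p (T (int q *s a) x) = p x"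
    using p unfolding inv_funs_def by auto
  have BL: "(indicator B :: 'a \<Rightarrow> complex) \<in> L2 M" by (rule L2_indicator[OF finite_measure B])
  have [measurable]: "p \<in> borel_measurable M" by (rule L2_borel_measurable[OF pL])
  have [measurable]: "T a \<in> M \<rightarrow>\<^sub>M M" for a by (rule mp_action_measurable[OF mp])
  have [measurable]: "B \<in> sets M" by (rule B)
  have each: "(\<integral>x. ?f a x \<partial>M) = (\<integral>x. indicator B x * cnj (p x) \<partial>M)" for a
  proof -
    have "(\<integral>x. ?f a x \<partial>M) = (\<integral>x. indicator B (T (int q *s a) x) * cnj (p (T (int q *s a) x)) \<partial>M)"
    proof (rule integral_cong_AE)
      show "AE x in M. ?f a x = indicator B (T (int q *s a) x) * cnj (p (T (int q *s a) x))"
        using p_inv[of a] by eventually_elim simp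
    qed (measurable, measurable)
    also have "\<dots> = (\<integral>x. indicator B x * cnj (p x) \<partial>M)"
      by (rule integral_mp_action[OF mp]) measurable
    finally show ?thesis .
  qed
  have "of_real (visit_freq T q B n x) * cnj (p x) = (\<Sum>a\<in>?S. ?f a x) / of_nat (card ?S)" for x
    unfolding visit_freq_eq_sum of_real_divide of_real_sum of_real_indicator
    by (simp only: times_divide_eq_left sum_distrib_right of_real_of_nat_eq)
  then have "(\<integral>x. of_real (visit_freq T q B n x) * cnj (p x) \<partial>M)
      = (\<integral>x. (\<Sum>a\<in>?S. ?f a x) \<partial>M) / of_nat (card ?S)"
    by simp
  also have "\<dots> = (\<Sum>a\<in>?S. \<integral>x. indicator B x * cnj (p x) \<partial>M) / of_nat (card ?S)"
    using integrable_mult_cnj_L2[OF L2_mp_action[OF mp BL] pL] each by simp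
  also have "\<dots> = (\<integral>x. indicator B x * cnj (p x) \<partial>M)"
    using card_box_pos[OF n, where 'd = 'd] by simp
  finally show ?thesis .
qed

lemma (in prob_space) equidistributed_limit:
  fixes T :: "int^'d \<Rightarrow> 'a \<Rightarrow> 'a"
  assumes mp: "mp_action M T" and B: "B \<in> sets M" and eqd: "equidistributed M T q \<delta> B"
  obtains L where "L \<in> borel_measurable M"
    and "AE x in M. (\<lambda>n. visit_freq T q B n x) \<longlonglongrightarrow> L x"
    and "AE x in M. 0 \<le> L x \<and> L x \<le> 1 \<and> L x \<le> (1 + \<delta>) * measure M B"
proof
  define L where "L x = lim (\<lambda>n. visit_freq T q B n x)" for x
  show "L \<in> borel_measurable M"
    unfolding L_def using borel_measurable_visit_freq[OF mp B] by (rule borel_measurable_lim_metric)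
  have conv: "AE x in M. (\<lambda>n. visit_freq T q B n x) \<longlonglongrightarrow> L x \<and> L x \<le> (1 + \<delta>) * measure M B"
    using eqd unfolding equidistributed_def
  proof eventually_elim
    case (elim x)
    then obtain l where l: "(\<lambda>n. visit_freq T q B n x) \<longlonglongrightarrow> l" "l \<le> (1 + \<delta>) * measure M B"
      unfolding visit_freq_def by blast
    moreover have "L x = l" unfolding L_def using l(1) by (rule limI)
    ultimately show ?case by simp
  qed
  then show "AE x in M. (\<lambda>n. visit_freq T q B n x) \<longlonglongrightarrow> L x" by eventually_elim simp
  from conv show "AE x in M. 0 \<le> L x \<and> L x \<le> 1 \<and> L x \<le> (1 + \<delta>) * measure M B"
  proof eventually_elim
    case (elim x)
    then have lim: "(\<lambda>n. visit_freq T q B n x) \<longlonglongrightarrow> L x" by simp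
    have "0 \<le> L x" by (rule LIMSEQ_le_const[OF lim]) (simp add: visit_freq_nonneg)
    moreover have "L x \<le> 1" by (rule LIMSEQ_le_const2[OF lim]) (simp add: visit_freq_le_1)
    ultimately show ?case using elim by simp
  qed
qed

lemma (in prob_space) integral_limit_mult_cnj:
  fixes T :: "int^'d \<Rightarrow> 'a \<Rightarrow> 'a"
  assumes mp: "mp_action M T" and B: "B \<in> sets M" and p: "p \<in> inv_funs M T q"
    and L: "L \<in> borel_measurable M" and conv: "AE x in M. (\<lambda>n. visit_freq T q B n x) \<longlonglongrightarrow> L x"
    and bounds: "AE x in M. 0 \<le> L x \<and> L x \<le> 1"
  shows "(\<integral>x. of_real (L x) * cnj (p x) \<partial>M) = (\<integral>x. indicator B x * cnj (p x) \<partial>M)"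
proof -
  have pL: "p \<in> L2 M" using p by (simp add: inv_funs_def)
  have [measurable]: "p \<in> borel_measurable M" by (rule L2_borel_measurable[OF pL])
  have [measurable]: "L \<in> borel_measurable M" by (rule L)
  have [measurable]: "(\<lambda>x. visit_freq T q B n x) \<in> borel_measurable M" for n
    by (rule borel_measurable_visit_freq[OF mp B])
  have lim: "(\<lambda>n. \<integral>x. of_real (visit_freq T q B n x) * cnj (p x) \<partial>M)
      \<longlonglongrightarrow> (\<integral>x. of_real (L x) * cnj (p x) \<partial>M)"
  proof (rule integral_dominated_convergence[where w = "\<lambda>x. cmod (p x)"])
    show "integrable M (\<lambda>x. cmod (p x))" using integrable_L2[OF finite_measure pL] by simp
    show "AE x in M. (\<lambda>n. of_real (visit_freq T q B n x) * cnj (p x)) \<longlonglongrightarrow> of_real (L x) * cnj (p x)"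
      using conv by eventually_elim (intro tendsto_intros)
    show "AE x in M. norm (of_real (visit_freq T q B n x) * cnj (p x)) \<le> cmod (p x)" for n
      by (intro AE_I2)
         (simp add: norm_mult abs_of_nonneg[OF visit_freq_nonneg] mult_left_le_one_le
           visit_freq_nonneg visit_freq_le_1)
  qed (measurable, measurable)
  have ev: "\<forall>\<^sub>F n in sequentially. (\<integral>x. of_real (visit_freq T q B n x) * cnj (p x) \<partial>M)
      = (\<integral>x. indicator B x * cnj (p x) \<partial>M)"
    unfolding eventually_sequentially using integral_visit_freq_mult_cnj[OF mp B p] by blast
  show ?thesis using LIMSEQ_unique[OF lim tendsto_eventually[OF ev]] .
qed

lemma mult_le_AM_GM:
  fixes l c t y :: real
  assumes "0 \<le> l" "l \<le> c" "0 < t"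
  shows "l * y \<le> t / 2 * l + c / (2 * t) * y\<^sup>2"
proof -
  have "2 * t * (l * y) \<le> l * (t\<^sup>2 + y\<^sup>2)"
    using mult_left_mono[OF sum_squares_bound[of t y] assms(1)] by (simp add: power2_eq_square algebra_simps)
  also have "\<dots> \<le> l * t\<^sup>2 + c * y\<^sup>2"
    using mult_right_mono[OF assms(2), of "y\<^sup>2"] by (simp add: algebra_simps)
  also have "\<dots> = 2 * t * (t / 2 * l + c / (2 * t) * y\<^sup>2)"
    using assms(3) by (simp add: field_simps power2_eq_square)
  finally show ?thesis using assms(3) by simp
qed

lemma le_mult_if_AM_GM_bounds:
  fixes P m c :: real
  assumes "0 \<le> m" "0 \<le> c" and bound: "\<And>t. 0 < t \<Longrightarrow> P \<le> t / 2 * m + c / (2 * t) * P"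
  shows "P \<le> c * m"
proof (cases "P \<le> 0")
  case True
  then show ?thesis using assms(1,2) by (meson mult_nonneg_nonneg order_trans)
next
  case False
  show ?thesis
  proof (cases "m = 0")
    case True
    then have "P \<le> c / (2 * (c + 1)) * P" using bound[of "c + 1"] assms(2) by simp
    also have "\<dots> < P"
      using mult_strict_right_mono[of "c / (2 * (c + 1))" 1 P] False assms(2) by simp
    finally show ?thesis by simp
  next
    case False
    then have "P \<le> P / 2 + c * m / 2"
      using bound[of "P / m"] \<open>\<not> P \<le> 0\<close> assms(1) by (simp add: field_simps power2_eq_square)
    then show ?thesis by simp
  qed
qed

lemma weighted_integral_sq_le:
  fixes L u :: "'a \<Rightarrow> real"
  assumes "integrable M L" "integrable M (\<lambda>x. (u x)\<^sup>2)" "integrable M (\<lambda>x. L x * u x)"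
    and bounds: "AE x in M. 0 \<le> L x \<and> L x \<le> c" and "0 \<le> c"
    and le: "(\<integral>x. (u x)\<^sup>2 \<partial>M) \<le> (\<integral>x. L x * u x \<partial>M)"
  shows "(\<integral>x. (u x)\<^sup>2 \<partial>M) \<le> c * integral\<^sup>L M L"
proof (rule le_mult_if_AM_GM_bounds)
  show "0 \<le> integral\<^sup>L M L" using bounds by (intro integral_nonneg_AE) auto
  fix t :: real assume "0 < t"
  have "(\<integral>x. L x * u x \<partial>M) \<le> (\<integral>x. t / 2 * L x + c / (2 * t) * (u x)\<^sup>2 \<partial>M)"
  proof (rule integral_mono_AE)
    show "integrable M (\<lambda>x. t / 2 * L x + c / (2 * t) * (u x)\<^sup>2)" using assms by simp
    show "AE x in M. L x * u x \<le> t / 2 * L x + c / (2 * t) * (u x)\<^sup>2"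
      using bounds
    proof eventually_elim
      case (elim x)
      then show ?case using mult_le_AM_GM[of "L x" c t "u x"] \<open>0 < t\<close> by simp
    qed
  qed (rule assms)
  also have "\<dots> = t / 2 * integral\<^sup>L M L + c / (2 * t) * (\<integral>x. (u x)\<^sup>2 \<partial>M)"
    using assms by simp
  finally show "(\<integral>x. (u x)\<^sup>2 \<partial>M) \<le> t / 2 * integral\<^sup>L M L + c / (2 * t) * (\<integral>x. (u x)\<^sup>2 \<partial>M)"
    using le by linarith
qed (rule assms)

lemma (in prob_space) integral_limit_visit_freq:
  fixes T :: "int^'d \<Rightarrow> 'a \<Rightarrow> 'a"
  assumes mp: "mp_action M T" and B: "B \<in> sets M"
    and L: "L \<in> borel_measurable M" and conv: "AE x in M. (\<lambda>n. visit_freq T q B n x) \<longlonglongrightarrow> L x"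
    and bounds: "AE x in M. 0 \<le> L x \<and> L x \<le> 1"
  shows "integral\<^sup>L M L = measure M B"
proof -
  have "(\<lambda>_. 1) \<in> inv_funs M T q" using L2_const[OF finite_measure] by (simp add: inv_funs_def)
  from integral_limit_mult_cnj[OF mp B this L conv bounds]
  have "(\<integral>x. of_real (L x) \<partial>M) = (\<integral>x. of_real (indicator B x) \<partial>M :: complex)"
    by (simp add: of_real_indicator)
  then show ?thesis using B by (simp add: integral_complex_of_real)
qed

lemma L2_inner_eq_integral_cmod_sq_if_orth:
  assumes "f \<in> L2 M" "p \<in> L2 M" "L2_inner M (\<lambda>x. f x - p x) p = 0"
  shows "L2_inner M f p = of_real (\<integral>x. (cmod (p x))\<^sup>2 \<partial>M)"
proof -
  have "L2_inner M f p = (\<integral>x. p x * cnj (p x) \<partial>M)"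
    using assms integrable_mult_cnj_L2[OF assms(1,2)] integrable_mult_cnj_L2[OF assms(2,2)]
    by (simp add: L2_inner_def left_diff_distrib)
  also have "\<dots> = (\<integral>x. of_real ((cmod (p x))\<^sup>2) \<partial>M)" by (simp only: complex_norm_square)
  also have "\<dots> = of_real (\<integral>x. (cmod (p x))\<^sup>2 \<partial>M)" by (rule integral_complex_of_real)
  finally show ?thesis .
qed

lemma (in prob_space) integral_cmod_sq_le_if_orth_indicator:
  fixes T :: "int^'d \<Rightarrow> 'a \<Rightarrow> 'a"
  assumes mp: "mp_action M T" and B: "B \<in> sets M" and eqd: "equidistributed M T q \<delta> B"
    and p: "p \<in> inv_funs M T q" and orth: "L2_inner M (\<lambda>x. indicator B x - p x) p = 0"
  shows "(\<integral>x. (cmod (p x))\<^sup>2 \<partial>M) \<le> (1 + \<delta>) * (measure M B)\<^sup>2"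
proof -
  obtain L where L[measurable]: "L \<in> borel_measurable M"
    and conv: "AE x in M. (\<lambda>n. visit_freq T q B n x) \<longlonglongrightarrow> L x"
    and bounds: "AE x in M. 0 \<le> L x \<and> L x \<le> 1 \<and> L x \<le> (1 + \<delta>) * measure M B"
    using equidistributed_limit[OF mp B eqd] by blast
  have L01: "AE x in M. 0 \<le> L x \<and> L x \<le> 1" using bounds by eventually_elim simp
  have pL: "p \<in> L2 M" using p by (simp add: inv_funs_def)
  have [measurable]: "p \<in> borel_measurable M" by (rule L2_borel_measurable[OF pL])
  have int_p: "integrable M (\<lambda>x. cmod (p x))" using integrable_L2[OF finite_measure pL] by simp
  have "AE x in M. \<bar>L x\<bar> * cmod (p x) \<le> cmod (p x)"
    using bounds by eventually_elim (simp add: mult_left_le_one_le)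
  then have int_Lp: "integrable M (\<lambda>x. L x * cmod (p x))" "integrable M (\<lambda>x. of_real (L x) * cnj (p x))"
    by (simp_all add: Bochner_Integration.integrable_bound[OF int_p] abs_mult norm_mult)
  have "AE x in M. norm (L x) \<le> norm (1 :: real)" using bounds by eventually_elim simp
  then have int_L: "integrable M L" by (rule Bochner_Integration.integrable_bound[OF integrable_const L])
  have "(\<integral>x. (cmod (p x))\<^sup>2 \<partial>M) = Re (L2_inner M (indicator B) p)"
    using L2_inner_eq_integral_cmod_sq_if_orth[OF L2_indicator[OF finite_measure B] pL orth] by simp
  also have "\<dots> = (\<integral>x. L x * Re (p x) \<partial>M)"
    using integral_limit_mult_cnj[OF mp B p L conv L01] integral_Re[OF int_Lp(2)]
    by (simp add: L2_inner_def)
  also have "\<dots> \<le> (\<integral>x. L x * cmod (p x) \<partial>M)"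
  proof (rule integral_mono_AE)
    show "AE x in M. L x * Re (p x) \<le> L x * cmod (p x)"
      using bounds by eventually_elim (simp add: mult_left_mono complex_Re_le_cmod)
  qed (use integrable_Re[OF int_Lp(2)] int_Lp(1) in simp_all)
  finally have le: "(\<integral>x. (cmod (p x))\<^sup>2 \<partial>M) \<le> (\<integral>x. L x * cmod (p x) \<partial>M)" .
  have L_le: "AE x in M. 0 \<le> L x \<and> L x \<le> (1 + \<delta>) * measure M B"
    using bounds by eventually_elim simp
  then have "AE x in M. 0 \<le> (1 + \<delta>) * measure M B" by eventually_elim simp
  then have "0 \<le> (1 + \<delta>) * measure M B" by (simp add: AE_const)
  with weighted_integral_sq_le[where u = "\<lambda>x. cmod (p x)", OF int_L L2_integrable_sq[OF pL] int_Lp(1) L_le _ le]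
  have "(\<integral>x. (cmod (p x))\<^sup>2 \<partial>M) \<le> (1 + \<delta>) * measure M B * integral\<^sup>L M L" .
  then show ?thesis
    using integral_limit_visit_freq[OF mp B L conv L01] by (simp add: power2_eq_square mult.assoc)
qed

lemma (in prob_space) orth_proj_inv_funs:
  fixes T :: "int^'d \<Rightarrow> 'a \<Rightarrow> 'a"
  assumes erg: "ergodic_action M T" and q: "q > 0" and B: "B \<in> sets M"
    and h: "is_orth_proj M (indicator B) (Eig M T (Rq_star q)) h"
  shows "is_orth_proj M (indicator B) (inv_funs M T q) (\<lambda>x. of_real (measure M B) + h x)"
proof -
  have mp: "mp_action M T" using erg by (simp add: ergodic_action_def)
  have hE: "h \<in> Eig M T (Rq_star q)"
    and h_orth: "\<And>v. v \<in> Eig M T (Rq_star q) \<Longrightarrow> L2_inner M (\<lambda>x. indicator B x - h x) v = 0"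
    using h unfolding is_orth_proj_def by auto
  have hL: "h \<in> L2 M" using hE by (simp add: Eig_def)
  have BL: "(indicator B :: 'a \<Rightarrow> complex) \<in> L2 M" by (rule L2_indicator[OF finite_measure B])
  define p where "p x = of_real (measure M B) + h x" for x
  define r where "r = (\<lambda>x. indicator B x - p x)"
  have pL: "p \<in> L2 M" unfolding p_def by (rule L2_add[OF L2_const[OF finite_measure] hL])
  have rL: "r \<in> L2 M" unfolding r_def by (rule L2_diff[OF BL pL])
  have p_inv: "p \<in> inv_funs M T q"
    using pL Eig_Rq_star_invariant[OF mp hE] by (simp add: inv_funs_def p_def)
  have "(\<integral>x. indicator B x \<partial>M) = (\<integral>x. of_real (indicator B x) \<partial>M :: complex)"
    by (simp only: of_real_indicator)
  also have "\<dots> = of_real (measure M B)" using B by (simp add: integral_complex_of_real)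
  finally have r0: "integral\<^sup>L M r = 0"
    unfolding r_def p_def
    using integrable_L2[OF finite_measure BL] integrable_L2[OF finite_measure hL]
      integral_Eig_Rq_star[OF mp hE] prob_space
    by simp
  have r_orth: "L2_inner M r v = 0" if v: "v \<in> Eig M T (Rq_star q)" for v
  proof -
    have vL: "v \<in> L2 M" using v by (simp add: Eig_def)
    have "L2_inner M r v
        = (\<integral>x. (indicator B x - h x) * cnj (v x) - of_real (measure M B) * cnj (v x) \<partial>M)"
      unfolding L2_inner_def r_def p_def by (simp add: algebra_simps)
    also have "\<dots> = L2_inner M (\<lambda>x. indicator B x - h x) v - of_real (measure M B) * cnj (integral\<^sup>L M v)"
      using integrable_mult_cnj_L2[OF L2_diff[OF BL hL] vL] integrable_L2[OF finite_measure vL]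
      unfolding L2_inner_def by simp
    finally show ?thesis using h_orth[OF v] integral_Eig_Rq_star[OF mp v] by simp
  qed
  show ?thesis
    unfolding is_orth_proj_def p_def[symmetric]
    using p_inv L2_inner_inv_funs_eq_0[OF erg q rL r_orth r0] by (simp add: r_def)
qed

lemma (in prob_space) integral_cmod_sq_of_real_add:
  assumes h: "h \<in> L2 M" and h0: "integral\<^sup>L M h = 0"
  shows "(\<integral>x. (cmod (of_real c + h x))\<^sup>2 \<partial>M) = c\<^sup>2 + (\<integral>x. (cmod (h x))\<^sup>2 \<partial>M)"
proof -
  have "(cmod (of_real c + z))\<^sup>2 = c\<^sup>2 + 2 * c * Re z + (cmod z)\<^sup>2" for z
    unfolding cmod_power2 by (simp add: power2_sum algebra_simps)
  moreover have "(\<integral>x. Re (h x) \<partial>M) = 0"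
    using integral_Re[OF integrable_L2[OF finite_measure h]] h0 by simp
  ultimately show ?thesis
    using integrable_Re[OF integrable_L2[OF finite_measure h]] L2_integrable_sq[OF h] prob_space
    by simp
qed

theorem proposition3p6:
  fixes M :: "'a measure" and T :: "int^'d \<Rightarrow> 'a \<Rightarrow> 'a"
    and q :: nat and \<delta> :: real and B :: "'a set" and h :: "'a \<Rightarrow> complex"
  assumes "prob_space M"
    and "ergodic_action M T"
    and "q > 0" and "\<delta> > 0"
    and "B \<in> sets M"
    and "equidistributed M T q \<delta> B"
    and "is_orth_proj M (indicator B) (Eig M T (Rq_star q)) h"
  shows "is_orth_proj M (indicator B) (inv_funs M T q) (\<lambda>x. complex_of_real (measure M B) + h x)
    \<and> L2_norm M h \<le> sqrt (2 * \<delta> + \<delta>\<^sup>2) * measure M B"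
proof
  interpret prob_space M by fact
  have mp: "mp_action M T" using assms(2) by (simp add: ergodic_action_def)
  have hE: "h \<in> Eig M T (Rq_star q)" using assms(7) by (simp add: is_orth_proj_def)
  have hL: "h \<in> L2 M" using hE by (simp add: Eig_def)
  let ?\<mu> = "measure M B"
  show "is_orth_proj M (indicator B) (inv_funs M T q) (\<lambda>x. of_real ?\<mu> + h x)"
    by (rule orth_proj_inv_funs[OF assms(2,3,5,7)])
  then have "(\<integral>x. (cmod (of_real ?\<mu> + h x))\<^sup>2 \<partial>M) \<le> (1 + \<delta>) * ?\<mu>\<^sup>2"
    using assms(5,6) by (intro integral_cmod_sq_le_if_orth_indicator[OF mp]) (auto simp: is_orth_proj_def)
  then have "(L2_norm M h)\<^sup>2 \<le> \<delta> * ?\<mu>\<^sup>2"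
    unfolding L2_norm_sq integral_cmod_sq_of_real_add[OF hL integral_Eig_Rq_star[OF mp hE]]
    by (simp add: algebra_simps)
  also have "\<dots> \<le> (sqrt (2 * \<delta> + \<delta>\<^sup>2) * ?\<mu>)\<^sup>2"
    using assms(4) by (simp add: power_mult_distrib mult_right_mono)
  finally show "L2_norm M h \<le> sqrt (2 * \<delta> + \<delta>\<^sup>2) * ?\<mu>"
    by (rule power2_le_imp_le) (use assms(4) in \<open>auto intro!: mult_nonneg_nonneg\<close>)
qed

end
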